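(* Let $\mathcal{E}$ be a set, let $d\ge 1$, and let $x\mapsto \vec{x}\in\mathbb{R}^d$ be an arbitrary assignment of a vector to each element $x\in\mathcal{E}$. Fix vectors $w_1,b_1\in\mathbb{R}^d$ and define $g:\mathbb{R}^d\to\mathbb{R}^d$ by $g(\vec{v})=\mathrm{ReLU}(w_1\otimes \vec{v}+b_1)$, where $\otimes$ is component-wise multiplication and $\mathrm{ReLU}(u)=\max(0,u)$ is applied component-wise, and define $f(\vec{v})=\vec{v}+g(\vec{v})$. Define a binary relation $\prec$ on $\mathcal{E}$ by $$x\prec y \iff f(\vec{x})_i<\vec{y}_i \text{ for all } i=1,\dots,d.$$ Then $\prec$ is asymmetric: for any two distinct $x,y\in\mathcal{E}$, if $x\prec y$ then $y\nprec x$.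
   Context: $\vec{v}_i$ denotes the $i$-th component of $\vec{v}\in\mathbb{R}^d$. *)

theory Defs
  imports "HOL-Analysis.Analysis"
begin

definition relu :: "real \<Rightarrow> real" where
  "relu u = max 0 u"

definition gmap :: "real^'d \<Rightarrow> real^'d \<Rightarrow> real^'d \<Rightarrow> real^'d" where
  "gmap w1 b1 v = (\<chi> i. relu (w1 $ i * v $ i + b1 $ i))"

definition fmap :: "real^'d \<Rightarrow> real^'d \<Rightarrow> real^'d \<Rightarrow> real^'d" where
  "fmap w1 b1 v = v + gmap w1 b1 v"

definition prec :: "('e \<Rightarrow> real^'d) \<Rightarrow> real^'d \<Rightarrow> real^'d \<Rightarrow> 'e \<Rightarrow> 'e \<Rightarrow> bool" where
  "prec emb w1 b1 x y \<longleftrightarrow> (\<forall>i. fmap w1 b1 (emb x) $ i < emb y $ i)"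

end

theory Submission
  imports Defs
begin

lemma relu_ge_0: "0 \<le> relu u"
  by (simp add: relu_def)

lemma component_le_fmap: "v $ i \<le> fmap w1 b1 v $ i"
  by (simp add: fmap_def gmap_def relu_ge_0)

lemma prec_imp_component_less:
  assumes "prec emb w1 b1 x y"
  shows "emb x $ i < emb y $ i"
  using component_le_fmap assms unfolding prec_def by (blast intro: le_less_trans)

lemma prec_asym:
  assumes "prec emb w1 b1 x y"
  shows "\<not> prec emb w1 b1 y x"
proof
  assume "prec emb w1 b1 y x"
  then have "emb y $ i < emb x $ i" for i
    by (rule prec_imp_component_less)
  moreover have "emb x $ i < emb y $ i" for i
    using assms by (rule prec_imp_component_less)
  ultimately show False
    by (meson less_asym)
qed

theorem theorem1:
  fixes E :: "'e set"
    and emb :: "'e \<Rightarrow> real^'d::finite"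
    and w1 b1 :: "real^'d::finite"
  assumes "x \<in> E" and "y \<in> E" and "x \<noteq> y"
    and "prec emb w1 b1 x y"
  shows "\<not> prec emb w1 b1 y x"
  using assms(4) by (rule prec_asym)

end
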